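(* Let $f:\{0,\dots,r-1\}^n\to\mathbb{R}$ be an $r$-valued fitness function with a weak preference for $r-1$ at position $i\in\{1,\dots,n\}$. Consider the $r$-cGA optimizing $f$ with parameter $K$. Then for every $T\in\mathbb{N}$, \[\Pr\left[\min_{t\in\{0,\dots,T\}} p^{(t)}_{i,r-1}\leq p^{(0)}_{i,r-1}-\frac{1}{2r}\right]\leq 2\exp\left(-\frac{K^2}{8Tr^2}\right).\]
   Context: Let $n\geq 1$, $r\geq 2$ be integers and $K>0$. The $r$-cGA maximizing $f$ maintains frequencies $p^{(t)}_{i,j}$ ($i\in\{1,\dots,n\}$, $j\in\{0,\dots,r-1\}$), initialized to $p^{(0)}_{i,j}=1/r$. In iteration $t$ it samples $x,y\in\{0,\dots,r-1\}^n$ independently, each position $i$ independently with $\Pr[x_i=j]=p^{(t)}_{i,j}$; if $f(x)<f(y)$ it swaps $x$ and $y$; then it sets $p^{(t+1)}_{i,j}=p^{(t)}_{i,j}+\frac1K(\mathbf{1}[x_i=j]-\mathbf{1}[y_i=j])$ for all $i,j$, with no margins. It is assumed that $1/r$ is an integer multiple of $1/K$. The function $f$ has a weak preference for value $j$ at position $i$ if for all $x\in\{0,\dots,r-1\}^n$, $f(x_1,\dots,x_i,\dots,x_n)\leq f(x_1,\dots,x_{i-1},j,x_{i+1},\dots,x_n)$. *)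

theory Defs
  imports "HOL-Probability.Probability"
begin

text \<open>Search space: x with x i in {0,...,r-1} for positions i in {1..n} (extensional, PiE).
  Frequencies: p :: nat => nat => real, p i j for position i and value j.\<close>

type_synonym freqs = "nat \<Rightarrow> nat \<Rightarrow> real"

definition search_space :: "nat \<Rightarrow> nat \<Rightarrow> (nat \<Rightarrow> nat) set" where
  "search_space n r = PiE {1..n} (\<lambda>_. {..<r})"

definition weak_pref :: "nat \<Rightarrow> nat \<Rightarrow> ((nat \<Rightarrow> nat) \<Rightarrow> real) \<Rightarrow> nat \<Rightarrow> nat \<Rightarrow> bool" where
  "weak_pref n r f i j \<longleftrightarrow> (\<forall>x \<in> search_space n r. f x \<le> f (x(i := j)))"

definition sample_pos :: "nat \<Rightarrow> freqs \<Rightarrow> nat \<Rightarrow> nat pmf" where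
  "sample_pos r p i = embed_pmf (\<lambda>j. if j < r then p i j else 0)"

definition sample :: "nat \<Rightarrow> nat \<Rightarrow> freqs \<Rightarrow> (nat \<Rightarrow> nat) pmf" where
  "sample n r p = Pi_pmf {1..n} undefined (\<lambda>i. sample_pos r p i)"

definition ind :: "bool \<Rightarrow> real" where
  "ind b = (if b then 1 else 0)"

text \<open>One iteration of the r-cGA (no margins).\<close>
definition cga_step :: "((nat \<Rightarrow> nat) \<Rightarrow> real) \<Rightarrow> nat \<Rightarrow> nat \<Rightarrow> real \<Rightarrow> freqs \<Rightarrow> freqs pmf" where
  "cga_step f n r K p =
     do { x0 \<leftarrow> sample n r p;
          y0 \<leftarrow> sample n r p;
          let x = (if f x0 < f y0 then y0 else x0);
          let y = (if f x0 < f y0 then x0 else y0);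
          return_pmf (\<lambda>i j. p i j + (ind (x i = j) - ind (y i = j)) / K) }"

definition init_freqs :: "nat \<Rightarrow> freqs" where
  "init_freqs r = (\<lambda>i j. 1 / real r)"

fun cga_traj :: "((nat \<Rightarrow> nat) \<Rightarrow> real) \<Rightarrow> nat \<Rightarrow> nat \<Rightarrow> real \<Rightarrow> nat \<Rightarrow> freqs list pmf" where
  "cga_traj f n r K 0 = return_pmf [init_freqs r]"
| "cga_traj f n r K (Suc t) =
     bind_pmf (cga_traj f n r K t) (\<lambda>ps. map_pmf (\<lambda>q. ps @ [q]) (cga_step f n r K (last ps)))"

end

theory Submission
  imports Defs
begin

text \<open>
  Write \<open>D / K\<close>, with \<open>D \<in> {-1, 0, 1}\<close>, for the change of the frequency \<open>p i j\<close> in one step.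
  Exchanging the \<open>i\<close>-th entries of the two samples preserves their joint distribution, and the
  weak preference for \<open>j\<close> at \<open>i\<close> makes \<open>D\<close> plus its value on the exchanged pair nonnegative;
  hence \<open>E[D] \<ge> 0\<close>, so \<open>-p i j\<close> is a supermartingale with increments in \<open>[-1/K, 1/K]\<close>.
  By Hoeffding's lemma every increment has conditional moment generating function at most
  \<open>exp (\<lambda>\<^sup>2 / (2 K\<^sup>2))\<close>, so the process stopped when it first drops to \<open>p\<^sup>0 i j - a\<close> has
  moment generating function at most \<open>exp (T \<lambda>\<^sup>2 / (2 K\<^sup>2))\<close> after \<open>T\<close> steps. Markov's
  inequality with \<open>\<lambda> = a K\<^sup>2 / T\<close> bounds the probability of such a drop by
  \<open>exp (-a\<^sup>2 K\<^sup>2 / (2 T))\<close>; take \<open>a = 1 / (2 r)\<close>.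
  Because \<open>1 / r\<close> is a multiple of \<open>1 / K\<close>, the frequencies stay nonnegative multiples of
  \<open>1 / K\<close> summing to one, so the sampling distributions remain well defined.
\<close>

fun stopped_value :: "real \<Rightarrow> real list \<Rightarrow> real" where
  "stopped_value th [] = 0"
| "stopped_value th [a] = a"
| "stopped_value th (a # b # xs) = (if a \<le> th then a else stopped_value th (b # xs))"

lemma stopped_value_snoc:
  "xs \<noteq> [] \<Longrightarrow>
   stopped_value th (xs @ [q]) = (if \<exists>a\<in>set xs. a \<le> th then stopped_value th xs else q)"
  by (induction th xs rule: stopped_value.induct) auto

lemma stopped_value_eq_last:
  "xs \<noteq> [] \<Longrightarrow> \<forall>a\<in>set xs. th < a \<Longrightarrow> stopped_value th xs = last xs"
  by (induction th xs rule: stopped_value.induct) auto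

lemma stopped_value_le:
  "a \<in> set xs \<Longrightarrow> a \<le> th \<Longrightarrow> stopped_value th xs \<le> th"
  by (induction th xs rule: stopped_value.induct) auto

definition swap_at :: "'a \<Rightarrow> ('a \<Rightarrow> 'b) \<times> ('a \<Rightarrow> 'b) \<Rightarrow> ('a \<Rightarrow> 'b) \<times> ('a \<Rightarrow> 'b)" where
  "swap_at i = (\<lambda>(x, y). (x(i := y i), y(i := x i)))"

lemma swap_at_swap_at [simp]: "swap_at i (swap_at i z) = z"
  by (cases z) (auto simp: swap_at_def)

lemma pmf_Pi_pmf_split:
  assumes "finite A" "i \<in> A"
  shows "pmf (Pi_pmf A d P) x = pmf (P i) (x i) * pmf (Pi_pmf (A - {i}) d P) (x(i := d))"
proof -
  have "pmf (Pi_pmf (A - {i}) d P) (x(i := d))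
          = (if \<forall>k. k \<notin> A \<longrightarrow> x k = d then \<Prod>k\<in>A - {i}. pmf (P k) (x k) else 0)"
    using assms by (subst pmf_Pi) (auto intro!: prod.cong)
  then show ?thesis
    using assms by (auto simp: pmf_Pi prod.remove)
qed

lemma map_swap_at_pair_Pi_pmf:
  assumes "finite A" "i \<in> A"
  shows "map_pmf (swap_at i) (pair_pmf (Pi_pmf A d P) (Pi_pmf A d P))
           = pair_pmf (Pi_pmf A d P) (Pi_pmf A d P)"
proof (rule pmf_eqI)
  fix z :: "('a \<Rightarrow> 'b) \<times> ('a \<Rightarrow> 'b)"
  obtain x y where z: "z = (x, y)" by (cases z)
  let ?M = "Pi_pmf A d P"
  have "inj (swap_at i :: ('a \<Rightarrow> 'b) \<times> ('a \<Rightarrow> 'b) \<Rightarrow> _)"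
    by (metis injI swap_at_swap_at)
  then have "pmf (map_pmf (swap_at i) (pair_pmf ?M ?M)) z = pmf (pair_pmf ?M ?M) (swap_at i z)"
    by (metis pmf_map_inj' swap_at_swap_at)
  also have "\<dots> = pmf ?M (x(i := y i)) * pmf ?M (y(i := x i))"
    by (simp add: z swap_at_def pmf_pair)
  also have "\<dots> = pmf ?M x * pmf ?M y"
    by (simp add: pmf_Pi_pmf_split[OF assms])
  finally show "pmf (map_pmf (swap_at i) (pair_pmf ?M ?M)) z = pmf (pair_pmf ?M ?M) z"
    by (simp add: z pmf_pair)
qed

definition order_by_fitness ::
    "((nat \<Rightarrow> nat) \<Rightarrow> real) \<Rightarrow> (nat \<Rightarrow> nat) \<times> (nat \<Rightarrow> nat) \<Rightarrow> (nat \<Rightarrow> nat) \<times> (nat \<Rightarrow> nat)" where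
  "order_by_fitness f = (\<lambda>(x, y). if f x < f y then (y, x) else (x, y))"

definition cga_update :: "real \<Rightarrow> freqs \<Rightarrow> (nat \<Rightarrow> nat) \<times> (nat \<Rightarrow> nat) \<Rightarrow> freqs" where
  "cga_update K p = (\<lambda>(x, y) i j. p i j + (ind (x i = j) - ind (y i = j)) / K)"

lemma cga_step_eq_map_pair:
  "cga_step f n r K p
     = map_pmf (cga_update K p \<circ> order_by_fitness f) (pair_pmf (sample n r p) (sample n r p))"
  unfolding cga_step_def pair_pmf_def map_pmf_def
  by (auto simp: bind_assoc_pmf bind_return_pmf Let_def cga_update_def order_by_fitness_def
           intro!: bind_pmf_cong)

definition admissible_freqs :: "nat \<Rightarrow> nat \<Rightarrow> real \<Rightarrow> freqs \<Rightarrow> bool" where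
  "admissible_freqs n r K p \<longleftrightarrow>
     (\<forall>i\<in>{1..n}. (\<forall>j<r. \<exists>k::nat. p i j = real k / K) \<and> (\<Sum>j<r. p i j) = 1)"

lemma admissible_freqs_nonneg:
  "admissible_freqs n r K p \<Longrightarrow> K > 0 \<Longrightarrow> i \<in> {1..n} \<Longrightarrow> j < r \<Longrightarrow> p i j \<ge> 0"
  unfolding admissible_freqs_def by fastforce

lemma admissible_init_freqs:
  assumes "r > 0" "K > 0" "1 / real r = real m * (1 / K)"
  shows "admissible_freqs n r K (init_freqs r)"
proof -
  have "K = real r * real m" using assms by (auto simp: field_simps)
  then show ?thesis
    using assms unfolding admissible_freqs_def init_freqs_def by (auto intro!: exI[of _ m])
qed

lemma set_sample_pos:
  assumes "admissible_freqs n r K p" "K > 0" "i \<in> {1..n}"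
  shows "set_pmf (sample_pos r p i) = {j. j < r \<and> p i j \<noteq> 0}"
proof -
  have nonneg: "\<And>j. 0 \<le> (if j < r then p i j else 0)"
    using admissible_freqs_nonneg[OF assms] by auto
  have "(\<integral>\<^sup>+j. ennreal (if j < r then p i j else 0) \<partial>count_space UNIV)
          = (\<integral>\<^sup>+j. ennreal (p i j) \<partial>count_space {..<r})"
    by (subst nn_integral_count_space_indicator) (auto intro!: nn_integral_cong simp: indicator_def)
  also have "\<dots> = ennreal (\<Sum>j<r. p i j)"
    using admissible_freqs_nonneg[OF assms]
    by (subst nn_integral_count_space_finite) (auto intro: sum_ennreal)
  also have "\<dots> = 1"
    using assms unfolding admissible_freqs_def by auto
  finally show ?thesis
    unfolding sample_pos_def by (subst set_embed_pmf[OF nonneg]) auto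
qed

lemma set_sample:
  assumes "admissible_freqs n r K p" "K > 0" "x \<in> set_pmf (sample n r p)"
  shows "x \<in> search_space n r" and "\<And>i. i \<in> {1..n} \<Longrightarrow> x i < r \<and> p i (x i) \<noteq> 0"
proof -
  have x: "x \<in> PiE_dflt {1..n} undefined (set_pmf \<circ> sample_pos r p)"
    using assms(3) unfolding sample_def by (simp add: set_Pi_pmf)
  show "\<And>i. i \<in> {1..n} \<Longrightarrow> x i < r \<and> p i (x i) \<noteq> 0"
    using x set_sample_pos[OF assms(1,2)] by (auto simp: PiE_dflt_def)
  then show "x \<in> search_space n r"
    using x unfolding search_space_def PiE_dflt_def by (auto simp: PiE_def extensional_def)
qed

lemma sum_ind_eq_1: "a < (r::nat) \<Longrightarrow> (\<Sum>j<r. ind (a = j)) = 1"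
  unfolding ind_def using sum.delta'[of "{..<r}" a "\<lambda>_. (1::real)"] by simp

lemma admissible_freqs_cga_update:
  assumes adm: "admissible_freqs n r K p" and K: "K > 0"
    and x: "x \<in> set_pmf (sample n r p)" and y: "y \<in> set_pmf (sample n r p)"
  shows "admissible_freqs n r K (cga_update K p (x, y))"
  unfolding admissible_freqs_def
proof (intro ballI conjI allI impI)
  fix i j assume i: "i \<in> {1..n}" and j: "j < r"
  obtain k :: nat where k: "p i j = real k / K"
    using adm i j unfolding admissible_freqs_def by blast
  have "p i (y i) \<noteq> 0"
    using set_sample(2)[OF adm K y i] by auto
  \<comment> \<open>a frequency that can be sampled is at least \<open>1/K\<close>, so decreasing it keeps it nonnegative\<close>
  then have "y i = j \<Longrightarrow> k \<ge> 1"
    using k by (cases k) auto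
  then show "\<exists>k::nat. cga_update K p (x, y) i j = real k / K"
    by (cases "x i = j"; cases "y i = j")
       (auto simp: cga_update_def k ind_def add_divide_distrib diff_divide_distrib
             intro: exI[of _ "k + 1"] exI[of _ "k - 1"] exI[of _ k])
next
  fix i assume i: "i \<in> {1..n}"
  have "x i < r" "y i < r"
    using set_sample(2)[OF adm K x i] set_sample(2)[OF adm K y i] by auto
  then show "(\<Sum>j<r. cga_update K p (x, y) i j) = 1"
    using adm i
    by (simp add: cga_update_def sum.distrib sum_subtractf sum_ind_eq_1 admissible_freqs_def
             flip: sum_divide_distrib)
qed

lemma admissible_freqs_cga_step:
  assumes "admissible_freqs n r K p" "K > 0" "q \<in> set_pmf (cga_step f n r K p)"
  shows "admissible_freqs n r K q"
  using assms admissible_freqs_cga_update[OF assms(1,2)]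
  by (auto simp: cga_step_eq_map_pair order_by_fitness_def)

lemma cga_traj_admissible:
  assumes "K > 0" "admissible_freqs n r K (init_freqs r)"
    and "ps \<in> set_pmf (cga_traj f n r K T)"
  shows "length ps = Suc T \<and> (\<forall>p\<in>set ps. admissible_freqs n r K p)"
  using assms(3)
proof (induction T arbitrary: ps)
  case 0
  then show ?case using assms(2) by simp
next
  case (Suc T)
  then obtain ps0 q where ps: "ps = ps0 @ [q]" and ps0: "ps0 \<in> set_pmf (cga_traj f n r K T)"
    and q: "q \<in> set_pmf (cga_step f n r K (last ps0))"
    by auto
  have len: "length ps0 = Suc T" and adm0: "\<forall>p\<in>set ps0. admissible_freqs n r K p"
    using Suc.IH[OF ps0] by auto
  then have "last ps0 \<in> set ps0"
    by (intro last_in_set) auto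
  then have "admissible_freqs n r K q"
    using adm0 admissible_freqs_cga_step[OF _ assms(1) q] by blast
  then show ?case using ps len adm0 by auto
qed

definition freq_gain ::
    "((nat \<Rightarrow> nat) \<Rightarrow> real) \<Rightarrow> nat \<Rightarrow> nat \<Rightarrow> (nat \<Rightarrow> nat) \<times> (nat \<Rightarrow> nat) \<Rightarrow> real" where
  "freq_gain f i j xy =
     ind (fst (order_by_fitness f xy) i = j) - ind (snd (order_by_fitness f xy) i = j)"

lemma abs_freq_gain_le: "\<bar>freq_gain f i j xy\<bar> \<le> 1"
  by (auto simp: freq_gain_def ind_def)

lemma cga_update_order_by_fitness:
  "cga_update K p (order_by_fitness f xy) i j = p i j + freq_gain f i j xy / K"
  by (cases xy) (simp add: cga_update_def freq_gain_def order_by_fitness_def diff_divide_distrib)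

lemma freq_gain_add_swap_at_nonneg:
  assumes pref: "weak_pref n r f i j" and i: "i \<in> {1..n}"
    and x: "x \<in> search_space n r" and y: "y \<in> search_space n r"
  shows "freq_gain f i j (x, y) + freq_gain f i j (swap_at i (x, y)) \<ge> 0"
proof -
  have "x(i := y i) \<in> search_space n r" "y(i := x i) \<in> search_space n r"
    using x y i unfolding search_space_def by (auto simp: PiE_def extensional_def Pi_def)
  then have "f (x(i := y i)) \<le> f (x(i := j))" "f (y(i := x i)) \<le> f (y(i := j))"
    "f x \<le> f (x(i := j))" "f y \<le> f (y(i := j))"
    using pref x y unfolding weak_pref_def by auto
  moreover have "x i = j \<Longrightarrow> x(i := j) = x" "y i = j \<Longrightarrow> y(i := j) = y"
    by auto
  ultimately show ?thesis
    by (cases "x i = j"; cases "y i = j")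
       (auto simp: freq_gain_def order_by_fitness_def swap_at_def ind_def)
qed

lemma expectation_freq_gain_nonneg:
  assumes pref: "weak_pref n r f i j" and i: "i \<in> {1..n}"
    and adm: "admissible_freqs n r K p" and K: "K > 0"
  defines "M \<equiv> pair_pmf (sample n r p) (sample n r p)"
  shows "measure_pmf.expectation M (freq_gain f i j) \<ge> 0"
proof -
  have integrable: "integrable M (freq_gain f i j)" "integrable M (\<lambda>z. freq_gain f i j (swap_at i z))"
    by (auto intro!: measure_pmf.integrable_const_bound[where B=1] simp: abs_freq_gain_le)
  have "measure_pmf.expectation M (\<lambda>z. freq_gain f i j (swap_at i z))
          = measure_pmf.expectation (map_pmf (swap_at i) M) (freq_gain f i j)"
    by simp
  also have "\<dots> = measure_pmf.expectation M (freq_gain f i j)"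
    unfolding M_def sample_def using i by (subst map_swap_at_pair_Pi_pmf) auto
  finally have swap_eq: "measure_pmf.expectation M (\<lambda>z. freq_gain f i j (swap_at i z))
                           = measure_pmf.expectation M (freq_gain f i j)" .
  have "0 \<le> measure_pmf.expectation M (\<lambda>z. freq_gain f i j z + freq_gain f i j (swap_at i z))"
  proof (intro integral_nonneg_AE AE_pmfI)
    fix z assume "z \<in> set_pmf M"
    then show "0 \<le> freq_gain f i j z + freq_gain f i j (swap_at i z)"
      using freq_gain_add_swap_at_nonneg[OF pref i] set_sample(1)[OF adm K]
      unfolding M_def by (cases z) auto
  qed
  also have "\<dots> = 2 * measure_pmf.expectation M (freq_gain f i j)"
    using integrable swap_eq by simp
  finally show ?thesis by simp
qed

lemma cga_step_mgf_le:
  assumes pref: "weak_pref n r f i j" and i: "i \<in> {1..n}"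
    and adm: "admissible_freqs n r K p" and K: "K > 0" and l: "l > 0"
  shows "(\<integral>\<^sup>+q. ennreal (exp (-l * (q i j - p i j))) \<partial>cga_step f n r K p)
           \<le> ennreal (exp (l\<^sup>2 / (2 * K\<^sup>2)))"
proof -
  define N where "N = cga_step f n r K p"
  define M where "M = pair_pmf (sample n r p) (sample n r p)"
  define g where "g = (\<lambda>q::freqs. p i j - q i j)"
  have N: "N = map_pmf (cga_update K p \<circ> order_by_fitness f) M"
    unfolding N_def M_def by (rule cga_step_eq_map_pair)
  have g_N: "\<And>xy. g (cga_update K p (order_by_fitness f xy)) = - freq_gain f i j xy / K"
    by (simp add: g_def cga_update_order_by_fitness)
  interpret interval_bounded_random_variable N g "-1/K" "1/K"
  proof
    show "AE q in N. g q \<in> {-1/K..1/K}"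
    proof (rule AE_pmfI)
      fix q assume "q \<in> set_pmf N"
      then obtain xy where "g q = - freq_gain f i j xy / K"
        unfolding N using g_N by force
      then show "g q \<in> {-1/K..1/K}"
        using abs_freq_gain_le[of f i j xy] K by (auto simp: abs_le_iff field_simps)
    qed
  qed simp
  have "measure_pmf.expectation N g = - measure_pmf.expectation M (freq_gain f i j) / K"
    unfolding N by (simp add: g_N)
  then have Eg_nonpos: "measure_pmf.expectation N g \<le> 0"
    using expectation_freq_gain_nonneg[OF pref i adm K] K unfolding M_def by simp
  \<comment> \<open>since \<open>E g \<le> 0\<close>, centring \<open>g\<close> only increases the exponent\<close>
  have "(\<integral>\<^sup>+q. ennreal (exp (-l * (q i j - p i j))) \<partial>N)
          \<le> (\<integral>\<^sup>+q. ennreal (exp (l * (g q - measure_pmf.expectation N g))) \<partial>N)"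
    using Eg_nonpos l
    by (intro nn_integral_mono ennreal_leI)
       (simp add: g_def algebra_simps mult_nonneg_nonpos)
  also have "\<dots> \<le> ennreal (exp (l\<^sup>2 * (1/K - -1/K)\<^sup>2 / 8))"
    by (rule Hoeffdings_lemma_nn_integral[OF l])
  also have "l\<^sup>2 * (1/K - -1/K)\<^sup>2 / 8 = l\<^sup>2 / (2 * K\<^sup>2)"
    using K by (simp add: field_simps power2_eq_square)
  finally show ?thesis unfolding N_def .
qed

lemma cga_step_stopped_mgf_le:
  fixes th c :: real
  assumes pref: "weak_pref n r f i j" and i: "i \<in> {1..n}" and K: "K > 0" and l: "l > 0"
    and ps: "ps \<noteq> []" "admissible_freqs n r K (last ps)"
  defines "Z \<equiv> \<lambda>ps. ennreal (exp (-l * (stopped_value th (map (\<lambda>p. p i j) ps) - c)))"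
  shows "(\<integral>\<^sup>+q. Z (ps @ [q]) \<partial>cga_step f n r K (last ps)) \<le> Z ps * ennreal (exp (l\<^sup>2 / (2 * K\<^sup>2)))"
proof (cases "\<exists>a\<in>set (map (\<lambda>p. p i j) ps). a \<le> th")
  case True
  then have "(\<integral>\<^sup>+q. Z (ps @ [q]) \<partial>cga_step f n r K (last ps)) = Z ps"
    using ps by (simp add: Z_def stopped_value_snoc)
  also have "\<dots> \<le> Z ps * ennreal (exp (l\<^sup>2 / (2 * K\<^sup>2)))"
    using mult_left_mono[of 1 "ennreal (exp (l\<^sup>2 / (2 * K\<^sup>2)))" "Z ps"] by simp
  finally show ?thesis .
next
  case False
  then have "stopped_value th (map (\<lambda>p. p i j) ps) = last ps i j"
    using ps by (simp add: stopped_value_eq_last last_map not_le)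
  then have "\<And>q. Z (ps @ [q]) = ennreal (exp (-l * (q i j - last ps i j))) * Z ps"
    using False ps
    by (simp add: Z_def stopped_value_snoc algebra_simps flip: ennreal_mult'' exp_add)
  then have "(\<integral>\<^sup>+q. Z (ps @ [q]) \<partial>cga_step f n r K (last ps))
               = (\<integral>\<^sup>+q. ennreal (exp (-l * (q i j - last ps i j))) \<partial>cga_step f n r K (last ps)) * Z ps"
    by (simp add: nn_integral_multc)
  also have "\<dots> \<le> ennreal (exp (l\<^sup>2 / (2 * K\<^sup>2))) * Z ps"
    by (intro mult_right_mono cga_step_mgf_le[OF pref i ps(2) K l]) simp
  finally show ?thesis
    by (simp add: mult.commute)
qed

lemma cga_traj_stopped_mgf_le:
  assumes pref: "weak_pref n r f i j" and i: "i \<in> {1..n}" and K: "K > 0" and l: "l > 0"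
    and adm: "admissible_freqs n r K (init_freqs r)"
  shows "(\<integral>\<^sup>+ps. ennreal (exp (-l * (stopped_value th (map (\<lambda>p. p i j) ps) - init_freqs r i j)))
            \<partial>cga_traj f n r K T)
           \<le> ennreal (exp (real T * (l\<^sup>2 / (2 * K\<^sup>2))))"
proof (induction T)
  case 0
  show ?case by simp
next
  case (Suc T)
  define Z where "Z = (\<lambda>ps. ennreal (exp (-l * (stopped_value th (map (\<lambda>p. p i j) ps) - init_freqs r i j))))"
  define e where "e = ennreal (exp (l\<^sup>2 / (2 * K\<^sup>2)))"
  have "(\<integral>\<^sup>+ps. Z ps \<partial>cga_traj f n r K (Suc T))
          = (\<integral>\<^sup>+ps. (\<integral>\<^sup>+q. Z (ps @ [q]) \<partial>cga_step f n r K (last ps)) \<partial>cga_traj f n r K T)"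
    by simp
  also have "\<dots> \<le> (\<integral>\<^sup>+ps. Z ps * e \<partial>cga_traj f n r K T)"
  proof (intro nn_integral_mono_AE AE_pmfI)
    fix ps assume "ps \<in> set_pmf (cga_traj f n r K T)"
    then have "length ps = Suc T" and adm_ps: "\<forall>p\<in>set ps. admissible_freqs n r K p"
      using cga_traj_admissible[OF K adm] by auto
    then have "ps \<noteq> []"
      by auto
    moreover from this have "admissible_freqs n r K (last ps)"
      using adm_ps by simp
    ultimately show "(\<integral>\<^sup>+q. Z (ps @ [q]) \<partial>cga_step f n r K (last ps)) \<le> Z ps * e"
      unfolding Z_def e_def by (rule cga_step_stopped_mgf_le[OF pref i K l])
  qed
  also have "\<dots> = (\<integral>\<^sup>+ps. Z ps \<partial>cga_traj f n r K T) * e"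
    by (simp add: nn_integral_multc)
  also have "\<dots> \<le> ennreal (exp (real T * (l\<^sup>2 / (2 * K\<^sup>2)))) * e"
    using Suc.IH unfolding Z_def by (rule mult_right_mono) simp
  also have "\<dots> = ennreal (exp (real (Suc T) * (l\<^sup>2 / (2 * K\<^sup>2))))"
    by (simp add: e_def algebra_simps add_divide_distrib flip: ennreal_mult'' exp_add)
  finally show ?case unfolding Z_def .
qed

lemma cga_traj_prob_min_le:
  assumes pref: "weak_pref n r f i j" and i: "i \<in> {1..n}" and K: "K > 0" and a: "a > 0"
    and adm: "admissible_freqs n r K (init_freqs r)"
  shows "measure_pmf.prob (cga_traj f n r K T)
           {ps. Min ((\<lambda>t. (ps ! t) i j) ` {0..T}) \<le> init_freqs r i j - a}
         \<le> exp (- (a\<^sup>2 * K\<^sup>2) / (2 * real T))"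
proof (cases "T = 0")
  case True
  then show ?thesis by simp
next
  case False
  define M where "M = cga_traj f n r K T"
  define E where "E = {ps. Min ((\<lambda>t. (ps ! t) i j) ` {0..T}) \<le> init_freqs r i j - a}"
  define th where "th = init_freqs r i j - a"
  define l where "l = a * K\<^sup>2 / real T"
  define Z where "Z = (\<lambda>ps. ennreal (exp (-l * (stopped_value th (map (\<lambda>p. p i j) ps) - init_freqs r i j))))"
  have l: "l > 0"
    using False K a by (simp add: l_def)
  have Markov: "indicator E ps \<le> Z ps * ennreal (exp (-l * a))" if "ps \<in> set_pmf M" for ps
  proof (cases "ps \<in> E")
    case True
    let ?vs = "map (\<lambda>p. p i j) ps"
    have "length ps = Suc T"
      using cga_traj_admissible[OF K adm] that unfolding M_def by blast
    then have "?vs = map (\<lambda>t. (ps ! t) i j) [0..<Suc T]" and "?vs \<noteq> []"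
      by (auto simp: list_eq_iff_nth_eq simp del: upt_Suc)
    moreover have "Min ((\<lambda>t. (ps ! t) i j) ` {0..T}) \<le> th"
      using True by (simp add: E_def th_def)
    ultimately have "Min (set ?vs) \<in> set ?vs" "Min (set ?vs) \<le> th"
      by (simp_all add: atLeastLessThanSuc_atLeastAtMost del: upt_Suc)
    then have "stopped_value th ?vs \<le> th"
      by (rule stopped_value_le)
    then have "0 \<le> -l * (stopped_value th ?vs - th)"
      using l by (simp add: mult_nonneg_nonpos)
    then have "1 \<le> exp (-l * (stopped_value th ?vs - init_freqs r i j) + -l * a)"
      by (simp add: th_def algebra_simps)
    then show ?thesis
      using True by (simp add: Z_def ennreal_leI flip: ennreal_mult'' exp_add)
  qed simp
  have "ennreal (measure_pmf.prob M E) = (\<integral>\<^sup>+ps. indicator E ps \<partial>M)"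
    by (simp add: measure_pmf.emeasure_eq_measure)
  also have "\<dots> \<le> (\<integral>\<^sup>+ps. Z ps * ennreal (exp (-l * a)) \<partial>M)"
    by (intro nn_integral_mono_AE AE_pmfI Markov)
  also have "\<dots> = (\<integral>\<^sup>+ps. Z ps \<partial>M) * ennreal (exp (-l * a))"
    by (simp add: nn_integral_multc)
  also have "\<dots> \<le> ennreal (exp (real T * (l\<^sup>2 / (2 * K\<^sup>2)))) * ennreal (exp (-l * a))"
    using cga_traj_stopped_mgf_le[OF pref i K l adm] unfolding Z_def M_def
    by (rule mult_right_mono) simp
  also have "\<dots> = ennreal (exp (- (a\<^sup>2 * K\<^sup>2) / (2 * real T)))"
    using False K by (simp add: l_def power2_eq_square field_simps flip: ennreal_mult'' exp_add)
  finally show ?thesis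
    unfolding M_def E_def by simp
qed

theorem theorem4:
  fixes f :: "(nat \<Rightarrow> nat) \<Rightarrow> real" and n r i T :: nat and K :: real
  assumes "n \<ge> 1" and "r \<ge> 2" and "K > 0"
    and "\<exists>m::nat. 1 / real r = real m * (1 / K)"
    and "i \<in> {1..n}"
    and "weak_pref n r f i (r - 1)"
  shows "measure_pmf.prob (cga_traj f n r K T)
           {ps. Min ((\<lambda>t. (ps ! t) i (r - 1)) ` {0..T})
                  \<le> init_freqs r i (r - 1) - 1 / (2 * real r)}
         \<le> 2 * exp (- (K ^ 2) / (8 * real T * (real r) ^ 2))"
proof -
  obtain m :: nat where "1 / real r = real m * (1 / K)"
    using assms(4) by blast
  then have adm: "admissible_freqs n r K (init_freqs r)"
    using assms(2,3) by (intro admissible_init_freqs) auto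
  have a: "1 / (2 * real r) > 0"
    using assms(2) by simp
  have exponent: "(1 / (2 * real r))\<^sup>2 * K\<^sup>2 / (2 * real T) = K\<^sup>2 / (8 * real T * (real r)\<^sup>2)"
    by (simp add: power2_eq_square field_simps)
  show ?thesis
    by (rule order_trans[OF cga_traj_prob_min_le[OF assms(6,5,3) a adm]]) (simp add: exponent)
qed

end
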